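(* Let $\mathcal{H}$ be a $k$-uniform hypertree with $k \geq 3$, and let $\lambda \in \mathbb{C}$ with $\lambda \neq 0$. Then $\lambda$ is an eigenvalue of $\mathcal{H}$ if and only if there exists a vertex set $U \subseteq V(\mathcal{H})$ such that the induced subhypergraph $H = \mathcal{H}[U]$ is connected (hence itself a $k$-uniform hypertree) and $\lambda$ is a root of the matching polynomial $\varphi(H)$.
   Context: A $k$-uniform hypergraph $\mathcal{H}$ on vertex set $[n]$ has normalized adjacency tensor $A=(a_{i_1\dots i_k})$ of order $k$ and dimension $n$, where $a_{i_1 i_2\dots i_k} = \frac{1}{(k-1)!}$ if $\{i_1,\dots,i_k\}$ is an edge of $\mathcal{H}$ and $0$ otherwise. A pair $(\lambda,\mathbf{x})\in\mathbb{C}\times(\mathbb{C}^n\setminus\{0\})$ is an eigenpair (and $\lambda$ an eigenvalue) of $\mathcal{H}$ if $\sum_{i_2,\dots,i_k=1}^n a_{j i_2\dots i_k}x_{i_2}\cdots x_{i_k} = \lambda x_j^{k-1}$ for all $j\in[n]$. A $k$-uniform hypertree is a connected acyclic $k$-uniform hypergraph. For $U\subseteq V(\mathcal{H})$, the induced subhypergraph is $\mathcal{H}[U]=(U,\{e\in E(\mathcal{H}) : e\subseteq U\})$. A $t$-matching of $H$ is a set of $t$ pairwise disjoint edges. The matching polynomial of a $k$-uniform hypergraph $H$ is $\varphi(H)=\sum_{i=0}^{m}(-1)^i|\mathcal{M}_i|\,x^{(m-i)k}$, where $\mathcal{M}_i$ is the set of $i$-matchings of $H$ and $m$ is the maximum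 size of a matching in $H$. *)

theory Defs
  imports Complex_Main "HOL-Computational_Algebra.Polynomial"
begin

definition k_uniform :: "nat \<Rightarrow> 'a set \<Rightarrow> 'a set set \<Rightarrow> bool" where
  "k_uniform k V E \<longleftrightarrow> finite V \<and> (\<forall>e\<in>E. e \<subseteq> V \<and> card e = k)"

definition hg_adj :: "'a set set \<Rightarrow> ('a \<times> 'a) set" where
  "hg_adj E = {(u, v). \<exists>e\<in>E. u \<in> e \<and> v \<in> e}"

definition hg_connected :: "'a set \<Rightarrow> 'a set set \<Rightarrow> bool" where
  "hg_connected V E \<longleftrightarrow> (\<forall>u\<in>V. \<forall>v\<in>V. (u, v) \<in> (hg_adj E)\<^sup>*)"

definition hg_has_cycle :: "'a set set \<Rightarrow> bool" where
  "hg_has_cycle E \<longleftrightarrow> (\<exists>vs es. length vs = length es \<and> length es \<ge> 2 \<and>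
       distinct vs \<and> distinct es \<and> set es \<subseteq> E \<and>
       (\<forall>i < length es. vs ! i \<in> es ! i \<and> vs ! ((i + 1) mod length es) \<in> es ! i))"

definition k_hypertree :: "nat \<Rightarrow> 'a set \<Rightarrow> 'a set set \<Rightarrow> bool" where
  "k_hypertree k V E \<longleftrightarrow> k_uniform k V E \<and> hg_connected V E \<and> \<not> hg_has_cycle E"

definition adj_tensor :: "nat \<Rightarrow> 'a set set \<Rightarrow> 'a list \<Rightarrow> complex" where
  "adj_tensor k E ixs = (if set ixs \<in> E then 1 / of_nat (fact (k - 1)) else 0)"

definition hg_eigenpair :: "nat \<Rightarrow> 'a set \<Rightarrow> 'a set set \<Rightarrow> complex \<Rightarrow> ('a \<Rightarrow> complex) \<Rightarrow> bool" where
  "hg_eigenpair k V E lam x \<longleftrightarrow> (\<exists>v\<in>V. x v \<noteq> 0) \<and>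
     (\<forall>j\<in>V. (\<Sum>ixs\<in>{ixs. set ixs \<subseteq> V \<and> length ixs = k - 1}.
               adj_tensor k E (j # ixs) * (\<Prod>i\<leftarrow>ixs. x i)) = lam * x j ^ (k - 1))"

definition hg_eigenvalue :: "nat \<Rightarrow> 'a set \<Rightarrow> 'a set set \<Rightarrow> complex \<Rightarrow> bool" where
  "hg_eigenvalue k V E lam \<longleftrightarrow> (\<exists>x. hg_eigenpair k V E lam x)"

definition induced_edges :: "'a set set \<Rightarrow> 'a set \<Rightarrow> 'a set set" where
  "induced_edges E U = {e\<in>E. e \<subseteq> U}"

definition matchings :: "'a set set \<Rightarrow> nat \<Rightarrow> 'a set set set" where
  "matchings E i = {M. M \<subseteq> E \<and> card M = i \<and> pairwise disjnt M}"

definition max_matching_size :: "'a set set \<Rightarrow> nat" where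
  "max_matching_size E = Max {i. matchings E i \<noteq> {}}"

definition matching_poly :: "nat \<Rightarrow> 'a set set \<Rightarrow> complex poly" where
  "matching_poly k E = (let m = max_matching_size E in
     (\<Sum>i\<le>m. monom ((-1) ^ i * of_nat (card (matchings E i))) ((m - i) * k)))"

end

theory Submission
  imports Defs "HOL-Combinatorics.Multiset_Permutations"
begin

text \<open>Both directions are inductions on the number of vertices that remove a pendant edge; one exists
  in every nonempty acyclic hypergraph, namely the last edge of a longest Berge path. The induction
  follows the weighted matching sum \<open>W\<^sub>s(U)\<close>: the sum over the matchings \<open>M\<close> of \<open>\<H>[U]\<close> of
  \<open>(-1/\<lambda>\<^sup>k)\<^bsup>|M|\<^esup>\<close> times the product of the vertex weights \<open>s\<close> over the vertices of \<open>U\<close> not covered by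
  \<open>M\<close>. For \<open>s = 1\<close> it is \<open>\<phi>(\<H>[U])(\<lambda>)\<close> up to a power of \<open>\<lambda>\<close>. For a pendant edge \<open>e = {u} \<union> P\<close>
  one has \<open>W\<^sub>s(U) = (\<Prod>\<^sub>P s) W\<^sub>s\<^sub>'(U - P)\<close>, where \<open>s'\<close> lowers \<open>s(u)\<close> by \<open>c\<close> with
  \<open>(\<Prod>\<^sub>P s) c = 1/\<lambda>\<^sup>k\<close>.

  The same substitution acts on eigenvectors. If \<open>x\<close> is nowhere zero on \<open>U\<close> and solves the
  eigen-equation of \<open>\<H>[U]\<close> with vertex weights \<open>s\<close>, then deleting the leaves \<open>P\<close> and charging the term
  of \<open>e\<close> at \<open>u\<close> to \<open>s(u)\<close> gives such a vector for \<open>s'\<close> on \<open>U - P\<close>. Hence the nonzero part of an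
  eigenvector on a connected component of its support forces \<open>W = 0\<close>, that is \<open>\<phi>(\<lambda>) = 0\<close>. Conversely,
  \<open>W = 0\<close> lets one rebuild the leaves edge by edge from \<open>k\<close>-th roots, producing a vector that is nowhere
  zero on some \<open>U\<^sub>0 \<subseteq> U\<close> such that every other edge meets \<open>U\<^sub>0\<close> in at most one vertex; as \<open>k \<ge> 3\<close>, its
  extension by zero solves the eigen-equation of the whole hypertree.\<close>

section \<open>Berge paths\<close>

definition berge_path :: "'a set set \<Rightarrow> 'a list \<Rightarrow> 'a set list \<Rightarrow> bool" where
  "berge_path F vs es \<longleftrightarrow> length vs = Suc (length es) \<and> distinct vs \<and> distinct es \<and> set es \<subseteq> F \<and>
     (\<forall>i<length es. vs ! i \<in> es ! i \<and> vs ! Suc i \<in> es ! i)"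

lemma berge_path_length: "berge_path F vs es \<Longrightarrow> length vs = Suc (length es)"
  by (simp add: berge_path_def)

lemma berge_path_mono: "berge_path F vs es \<Longrightarrow> F \<subseteq> G \<Longrightarrow> berge_path G vs es"
  unfolding berge_path_def by blast

lemma hg_has_cycle_mono: "F \<subseteq> G \<Longrightarrow> hg_has_cycle F \<Longrightarrow> hg_has_cycle G"
  unfolding hg_has_cycle_def by blast

lemma berge_path_closing_edge_imp_cycle:
  assumes "berge_path F vs es" "es \<noteq> []" "e \<in> F" "e \<notin> set es" "hd vs \<in> e" "last vs \<in> e"
  shows "hg_has_cycle F"
  unfolding hg_has_cycle_def
proof (intro exI conjI)
  let ?es = "es @ [e]"
  have L: "length vs = Suc (length es)" using assms(1) by (rule berge_path_length)
  show "length vs = length ?es" using L by simp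
  show "2 \<le> length ?es" using assms(2) by (cases es) auto
  show "distinct vs" "distinct ?es" "set ?es \<subseteq> F" using assms(1,3,4) by (auto simp: berge_path_def)
  show "\<forall>i<length ?es. vs ! i \<in> ?es ! i \<and> vs ! ((i + 1) mod length ?es) \<in> ?es ! i"
  proof (intro allI impI)
    fix i assume i: "i < length ?es"
    show "vs ! i \<in> ?es ! i \<and> vs ! ((i + 1) mod length ?es) \<in> ?es ! i"
    proof (cases "i < length es")
      case True
      then show ?thesis using assms(1) by (auto simp: berge_path_def nth_append)
    next
      case False
      then have "i = length es" using i by simp
      then show ?thesis
        using assms L by (simp add: nth_append last_conv_nth hd_conv_nth flip: length_greater_0_conv)
    qed
  qed
qed

lemma berge_path_snoc:
  assumes "berge_path F vs es" "y \<notin> set vs" "f \<in> F" "f \<notin> set es" "last vs \<in> f" "y \<in> f"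
  shows "berge_path F (vs @ [y]) (es @ [f])"
  unfolding berge_path_def
proof (intro conjI allI impI)
  have L: "length vs = Suc (length es)" using assms(1) by (rule berge_path_length)
  show "length (vs @ [y]) = Suc (length (es @ [f]))" using L by simp
  show "distinct (vs @ [y])" "distinct (es @ [f])" "set (es @ [f]) \<subseteq> F"
    using assms by (auto simp: berge_path_def)
  fix j assume j: "j < length (es @ [f])"
  have "vs ! length es = last vs" using L by (simp add: last_conv_nth flip: length_greater_0_conv)
  then have "(vs @ [y]) ! j \<in> (es @ [f]) ! j \<and> (vs @ [y]) ! Suc j \<in> (es @ [f]) ! j"
    using assms j L by (cases "j = length es") (auto simp: berge_path_def nth_append)
  then show "(vs @ [y]) ! j \<in> (es @ [f]) ! j" "(vs @ [y]) ! Suc j \<in> (es @ [f]) ! j" by auto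
qed

lemma berge_subpath:
  assumes "berge_path F vs es" "i \<le> j" "j \<le> length es"
  shows "berge_path F (drop i (take (Suc j) vs)) (drop i (take j es))"
    and "hd (drop i (take (Suc j) vs)) = vs ! i"
    and "last (drop i (take (Suc j) vs)) = vs ! j"
proof -
  have L: "length vs = Suc (length es)" using assms(1) by (rule berge_path_length)
  show "berge_path F (drop i (take (Suc j) vs)) (drop i (take j es))"
    unfolding berge_path_def
  proof (intro conjI allI impI)
    show "length (drop i (take (Suc j) vs)) = Suc (length (drop i (take j es)))"
      using L assms by simp
    show "distinct (drop i (take (Suc j) vs))" "distinct (drop i (take j es))"
      "set (drop i (take j es)) \<subseteq> F"
      using assms(1) by (auto simp: berge_path_def dest!: in_set_dropD in_set_takeD)
    fix l assume "l < length (drop i (take j es))"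
    then have l: "i + l < length es" "i + l < j" using assms by auto
    then show "drop i (take (Suc j) vs) ! l \<in> drop i (take j es) ! l"
      "drop i (take (Suc j) vs) ! Suc l \<in> drop i (take j es) ! l"
      using assms(1) L by (auto simp: berge_path_def)
  qed
  show "hd (drop i (take (Suc j) vs)) = vs ! i" "last (drop i (take (Suc j) vs)) = vs ! j"
    using L assms by (simp_all add: hd_conv_nth last_conv_nth)
qed

lemma berge_path_take:
  assumes "berge_path F vs es" "i \<le> length es"
  shows "berge_path F (take (Suc i) vs) (take i es)" and "last (take (Suc i) vs) = vs ! i"
  using berge_subpath[OF assms(1) _ assms(2), of 0] by simp_all

lemma berge_subpath_closing_edge_imp_cycle:
  assumes "berge_path F vs es" "i < j" "j \<le> length es" "e \<in> F"
    "e \<notin> set (drop i (take j es))" "vs ! i \<in> e" "vs ! j \<in> e"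
  shows "hg_has_cycle F"
  using berge_subpath[OF assms(1) less_imp_le[OF assms(2)] assms(3)] assms
  by (intro berge_path_closing_edge_imp_cycle[of F _ "drop i (take j es)" e]) auto

lemma berge_path_edge:
  "berge_path F vs es \<Longrightarrow> i < length es \<Longrightarrow> es ! i \<in> F \<and> vs ! i \<in> es ! i \<and> vs ! Suc i \<in> es ! i"
  unfolding berge_path_def using nth_mem by blast

lemma distinct_nth_notin_take: "distinct xs \<Longrightarrow> j < length xs \<Longrightarrow> xs ! j \<notin> set (take j xs)"
  by (auto simp: in_set_conv_nth nth_eq_iff_index_eq)

lemma distinct_nth_notin_drop: "distinct xs \<Longrightarrow> j < length xs \<Longrightarrow> xs ! j \<notin> set (drop (Suc j) xs)"
  by (metis Cons_nth_drop_Suc distinct.simps(2) distinct_drop)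

lemma two_le_card_obtain:
  assumes "2 \<le> card A"
  obtains a b where "a \<in> A" "b \<in> A" "a \<noteq> b"
proof -
  have "finite A" using assms card.infinite by force
  then have "\<not> (\<forall>a\<in>A. \<forall>b\<in>A. a = b)" using assms card_le_Suc0_iff_eq[of A] by auto
  then show ?thesis using that by blast
qed

lemma hg_adj_rtrancl_imp_berge_path:
  assumes "(a, b) \<in> (hg_adj F)\<^sup>*"
  shows "\<exists>vs es. berge_path F vs es \<and> hd vs = a \<and> last vs = b"
  using assms
proof (induction rule: rtrancl_induct)
  case base
  have "berge_path F [a] []" by (simp add: berge_path_def)
  then show ?case by fastforce
next
  case (step y z)
  then obtain vs es where P: "berge_path F vs es" "hd vs = a" "last vs = y" by blast
  from step(2) obtain f where f: "f \<in> F" "y \<in> f" "z \<in> f" by (auto simp: hg_adj_def)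
  have L: "length vs = Suc (length es)" using P(1) by (rule berge_path_length)
  then have vs: "vs \<noteq> []" by auto
  have hd_take: "hd (take (Suc i) vs) = a" for i using P(2) vs by (cases vs) simp_all
  show ?case
  proof (cases "z \<in> set vs")
    case True
    then obtain i where i: "i \<le> length es" "vs ! i = z"
      using L by (auto simp: in_set_conv_nth less_Suc_eq_le)
    show ?thesis using berge_path_take[OF P(1) i(1)] hd_take i(2) by blast
  next
    case z_new: False
    show ?thesis
    proof (cases "f \<in> set es")
      case True
      then obtain i where i: "i < length es" "es ! i = f" by (auto simp: in_set_conv_nth)
      note T = berge_path_take[OF P(1) less_imp_le[OF i(1)]]
      have "berge_path F (take (Suc i) vs @ [z]) (take i es @ [f])"
      proof (rule berge_path_snoc[OF T(1) _ f(1)])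
        show "z \<notin> set (take (Suc i) vs)" using z_new by (auto dest: in_set_takeD)
        show "f \<notin> set (take i es)"
          using distinct_nth_notin_take[of es i] P(1) i by (simp add: berge_path_def)
        show "last (take (Suc i) vs) \<in> f" using berge_path_edge[OF P(1) i(1)] T(2) i(2) by simp
      qed fact
      moreover have "hd (take (Suc i) vs @ [z]) = a" using hd_take[of i] vs by (simp add: hd_append)
      ultimately show ?thesis by (intro exI[of _ "take (Suc i) vs @ [z]"] exI[of _ "take i es @ [f]"]) simp
    next
      case False
      have "berge_path F (vs @ [z]) (es @ [f])"
        using berge_path_snoc[OF P(1) z_new f(1) False] P(3) f by simp
      moreover have "hd (vs @ [z]) = a" using P(2) vs by (simp add: hd_append)
      ultimately show ?thesis by (intro exI[of _ "vs @ [z]"] exI[of _ "es @ [f]"]) simp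
    qed
  qed
qed

lemma acyclic_edge_meets_connected_set_at_most_once:
  assumes acyclic: "\<not> hg_has_cycle E" and e: "e \<in> E" "\<not> e \<subseteq> U"
    and conn: "hg_connected U (induced_edges E U)"
  shows "card (e \<inter> U) \<le> 1"
proof (rule ccontr)
  assume "\<not> card (e \<inter> U) \<le> 1"
  then have "2 \<le> card (e \<inter> U)" by simp
  then obtain a b where ab: "a \<in> e \<inter> U" "b \<in> e \<inter> U" "a \<noteq> b" by (rule two_le_card_obtain)
  have "(a, b) \<in> (hg_adj (induced_edges E U))\<^sup>*" using conn ab by (simp add: hg_connected_def)
  from hg_adj_rtrancl_imp_berge_path[OF this] obtain vs es
    where P: "berge_path (induced_edges E U) vs es" "hd vs = a" "last vs = b" by blast
  have "es \<noteq> []"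
  proof
    assume "es = []"
    then have "length vs = 1" using berge_path_length[OF P(1)] by simp
    then have "hd vs = last vs" by (cases vs) simp_all
    then show False using P(2,3) ab(3) by simp
  qed
  moreover have "set es \<subseteq> induced_edges E U" using P(1) by (simp add: berge_path_def)
  then have "e \<notin> set es" using e(2) by (auto simp: induced_edges_def)
  moreover have "berge_path E vs es" using P(1) by (rule berge_path_mono) (auto simp: induced_edges_def)
  ultimately have "hg_has_cycle E"
    using P(2,3) ab by (intro berge_path_closing_edge_imp_cycle[of E vs es e] e(1)) simp_all
  then show False using acyclic by contradiction
qed

section \<open>Pendant edges\<close>

definition pendant_edge :: "'a set set \<Rightarrow> 'a set \<Rightarrow> 'a \<Rightarrow> bool" where
  "pendant_edge F e u \<longleftrightarrow> e \<in> F \<and> u \<in> e \<and> (\<forall>p\<in>e - {u}. \<forall>e'\<in>F. p \<in> e' \<longrightarrow> e' = e)"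

definition longest_berge_path :: "'a set set \<Rightarrow> 'a list \<Rightarrow> 'a set list \<Rightarrow> bool" where
  "longest_berge_path F vs es \<longleftrightarrow>
     berge_path F vs es \<and> (\<forall>vs' es'. berge_path F vs' es' \<longrightarrow> length es' \<le> length es)"

lemma berge_path_vertices_covered:
  assumes "berge_path F vs es" "es \<noteq> []"
  shows "set vs \<subseteq> \<Union> F"
proof
  fix v assume "v \<in> set vs"
  then obtain i where i: "i < length vs" "vs ! i = v" by (auto simp: in_set_conv_nth)
  have L: "length vs = Suc (length es)" using assms(1) by (rule berge_path_length)
  show "v \<in> \<Union> F"
  proof (cases "i < length es")
    case True
    then show ?thesis using berge_path_edge[OF assms(1) True] i by blast
  next
    case False
    then have "i - 1 < length es" "Suc (i - 1) = i" using i L assms(2) by (cases i; auto)+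
    then show ?thesis using berge_path_edge[OF assms(1), of "i - 1"] i by auto
  qed
qed

lemma ex_longest_berge_path:
  assumes "finite F" "F \<noteq> {}" and edges: "\<forall>e\<in>F. finite e \<and> 2 \<le> card e"
  shows "\<exists>vs es. longest_berge_path F vs es \<and> es \<noteq> []"
proof -
  define Q where "Q n \<longleftrightarrow> (\<exists>vs es. berge_path F vs es \<and> length es = n)" for n
  obtain e0 where e0: "e0 \<in> F" using assms(2) by auto
  then obtain a b where "a \<in> e0" "b \<in> e0" "a \<noteq> b" using edges two_le_card_obtain by metis
  then have "berge_path F [a, b] [e0]" using e0 by (simp add: berge_path_def)
  then have Q1: "Q 1" unfolding Q_def by force
  have bounded: "\<forall>n. Q n \<longrightarrow> n \<le> card (\<Union> F)"
  proof (intro allI impI)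
    fix n assume "Q n"
    then obtain vs es where P: "berge_path F vs es" "length es = n" by (auto simp: Q_def)
    show "n \<le> card (\<Union> F)"
    proof (cases "es = []")
      case False
      have "length vs = card (set vs)" using P(1) by (simp add: berge_path_def distinct_card)
      also have "\<dots> \<le> card (\<Union> F)"
        using berge_path_vertices_covered[OF P(1) False] assms(1) edges by (simp add: card_mono)
      finally show ?thesis using berge_path_length[OF P(1)] P(2) by simp
    qed (use P in simp)
  qed
  obtain n where n: "Q n" "\<forall>m. Q m \<longrightarrow> m \<le> n" using Nat.ex_has_greatest_nat[OF Q1 bounded] by blast
  then obtain vs es where P: "berge_path F vs es" "length es = n" by (auto simp: Q_def)
  have "length es' \<le> length es" if "berge_path F vs' es'" for vs' es'
    using n(2) that P(2) unfolding Q_def by blast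
  moreover have "es \<noteq> []" using n(2) Q1 P(2) by force
  ultimately show ?thesis using P(1) unfolding longest_berge_path_def by blast
qed

text \<open>Any further edge at the end of a longest path either closes a cycle or extends the path.\<close>

lemma longest_berge_path_end_edge:
  assumes P: "longest_berge_path F vs es" "es \<noteq> []"
    and acyclic: "\<not> hg_has_cycle F" and edges: "\<forall>e\<in>F. finite e \<and> 2 \<le> card e"
    and e': "e' \<in> F" "last vs \<in> e'"
  shows "e' = last es"
proof (rule ccontr)
  assume ne: "e' \<noteq> last es"
  define m where "m = length es"
  have path: "berge_path F vs es" using P(1) by (simp add: longest_berge_path_def)
  have m: "m \<ge> 1" "length vs = Suc m" using P(2) berge_path_length[OF path] by (auto simp: m_def Suc_le_eq)
  have last_vs: "last vs = vs ! m" using m by (simp add: last_conv_nth flip: length_greater_0_conv)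
  have dist: "distinct es" "distinct vs" using path by (auto simp: berge_path_def)
  show False
  proof (cases "e' \<in> set es")
    case True
    then obtain j where j: "j < m" "es ! j = e'" by (auto simp: in_set_conv_nth m_def)
    have "j \<noteq> m - 1" using j ne P(2) by (auto simp: last_conv_nth m_def)
    have "hg_has_cycle F"
    proof (rule berge_subpath_closing_edge_imp_cycle[OF path, of "Suc j" m e'])
      show "e' \<notin> set (drop (Suc j) (take m es))"
        using distinct_nth_notin_drop[OF dist(1), of j] j by (simp add: m_def)
      show "vs ! Suc j \<in> e'" using berge_path_edge[OF path, of j] j by (simp add: m_def)
    qed (use \<open>j \<noteq> m - 1\<close> j e' last_vs m_def in auto)
    then show False using acyclic by contradiction
  next
    case e'_new: False
    obtain y where y: "y \<in> e'" "y \<noteq> last vs"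
      using edges e' two_le_card_obtain[of e'] by metis
    show False
    proof (cases "y \<in> set vs")
      case True
      then obtain j where j: "j < Suc m" "vs ! j = y" using m by (auto simp: in_set_conv_nth)
      then have "j < m" using y last_vs by (cases "j = m") auto
      have "hg_has_cycle F"
        by (rule berge_subpath_closing_edge_imp_cycle[OF path, of j m e'])
           (use \<open>j < m\<close> e' e'_new j y last_vs in \<open>auto simp: m_def dest: in_set_dropD in_set_takeD\<close>)
      then show False using acyclic by contradiction
    next
      case False
      have "berge_path F (vs @ [y]) (es @ [e'])"
        by (rule berge_path_snoc[OF path False e'(1) e'_new e'(2) y(1)])
      then have "length (es @ [e']) \<le> length es" using P(1) unfolding longest_berge_path_def by blast
      then show False by simp
    qed
  qed
qed

text \<open>The last edge of a longest path is pendant at the second-to-last vertex.\<close>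

lemma acyclic_ex_pendant_edge:
  assumes "finite F" "F \<noteq> {}" and edges: "\<forall>e\<in>F. finite e \<and> 2 \<le> card e"
    and acyclic: "\<not> hg_has_cycle F"
  shows "\<exists>e u. pendant_edge F e u"
proof -
  obtain vs es where P: "longest_berge_path F vs es" "es \<noteq> []"
    using ex_longest_berge_path[OF assms(1-3)] by blast
  define m where "m = length es"
  have path: "berge_path F vs es" using P(1) by (simp add: longest_berge_path_def)
  have m: "m \<ge> 1" "length vs = Suc m" using P(2) berge_path_length[OF path] by (auto simp: m_def Suc_le_eq)
  have dist: "distinct es" using path by (simp add: berge_path_def)
  define e where "e = es ! (m - 1)"
  define u where "u = vs ! (m - 1)"
  have e_last: "e = last es" using P(2) by (simp add: e_def m_def last_conv_nth)
  have m1: "m - 1 < length es" "Suc (m - 1) = m" using m by (auto simp: m_def)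
  then have e: "e \<in> F" "u \<in> e" "vs ! m \<in> e"
    using berge_path_edge[OF path, of "m - 1"] by (simp_all add: e_def u_def)
  have prefix: "berge_path F (take m vs) (take (m - 1) es)" "last (take m vs) = u"
    using berge_path_take[OF path less_imp_le[OF m1(1)]] m1(2) by (simp_all add: u_def)
  have e_not_in_prefix: "e \<notin> set (take (m - 1) es)"
    using distinct_nth_notin_take[OF dist, of "m - 1"] m by (simp add: e_def m_def)
  have "e' = e" if p: "p \<in> e - {u}" and e': "e' \<in> F" "p \<in> e'" for p e'
  proof (cases "p \<in> set (take m vs)")
    case True
    then obtain i where i: "i < m" "vs ! i = p" using m by (auto simp: in_set_conv_nth)
    then have "i < m - 1" using p by (cases "i = m - 1") (auto simp: u_def)
    have "hg_has_cycle F"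
      by (rule berge_subpath_closing_edge_imp_cycle[OF path, of i "m - 1" e])
         (use \<open>i < m - 1\<close> e i p e_not_in_prefix in \<open>auto simp: m_def u_def dest: in_set_dropD\<close>)
    then show ?thesis using acyclic by contradiction
  next
    case False
    have "take (m - 1) es @ [e] = es"
      using P(2) unfolding e_last m_def by (metis append_butlast_last_id butlast_conv_take)
    then have "berge_path F (take m vs @ [p]) es"
      using berge_path_snoc[OF prefix(1) False e(1) e_not_in_prefix] prefix(2) e(2) p by simp
    then have "longest_berge_path F (take m vs @ [p]) es" using P(1) by (simp add: longest_berge_path_def)
    then show ?thesis using longest_berge_path_end_edge[OF _ P(2) acyclic edges e'(1)] e'(2) e_last by simp
  qed
  then show ?thesis using e unfolding pendant_edge_def by blast
qed

lemma induced_edges_mono: "A \<subseteq> B \<Longrightarrow> induced_edges E A \<subseteq> induced_edges E B"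
  by (auto simp: induced_edges_def)

lemma finite_induced_edges: "finite U \<Longrightarrow> finite (induced_edges E U)"
  by (rule finite_subset[of _ "Pow U"]) (auto simp: induced_edges_def)

lemma induced_edges_remove_pendant_leaves:
  assumes "pendant_edge (induced_edges E U) e u" "e - {u} \<noteq> {}"
  shows "induced_edges E (U - (e - {u})) = induced_edges E U - {e}"
  using assms by (auto simp: pendant_edge_def induced_edges_def)

section \<open>Weighted matching sums\<close>

definition all_matchings :: "'a set set \<Rightarrow> 'a set set set" where
  "all_matchings F = {M. M \<subseteq> F \<and> pairwise disjnt M}"

definition weighted_matching_sum :: "complex \<Rightarrow> 'a set set \<Rightarrow> ('a \<Rightarrow> complex) \<Rightarrow> 'a set \<Rightarrow> complex" where
  "weighted_matching_sum t E s U =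
     (\<Sum>M\<in>all_matchings (induced_edges E U). (-t) ^ card M * (\<Prod>j\<in>U - \<Union>M. s j))"

lemma finite_all_matchings: "finite F \<Longrightarrow> finite (all_matchings F)"
  unfolding all_matchings_def by (rule finite_subset[of _ "Pow F"]) auto

lemma matchings_eq_all_matchings: "matchings F i = {M\<in>all_matchings F. card M = i}"
  by (auto simp: matchings_def all_matchings_def)

lemma weighted_matching_sum_cong:
  "(\<And>j. j \<in> U \<Longrightarrow> s j = s' j) \<Longrightarrow> weighted_matching_sum t E s U = weighted_matching_sum t E s' U"
  unfolding weighted_matching_sum_def by (intro sum.cong refl arg_cong2[where f="(*)"] prod.cong) auto

lemma all_matchings_empty: "all_matchings {} = {{}}"
  by (auto simp: all_matchings_def)

lemma weighted_matching_sum_no_edges: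
  "induced_edges E U = {} \<Longrightarrow> weighted_matching_sum t E s U = (\<Prod>j\<in>U. s j)"
  by (simp add: weighted_matching_sum_def all_matchings_empty)

lemma bij_betw_insert_all_matchings:
  assumes e: "e \<in> induced_edges E U" "e \<noteq> {}"
  shows "bij_betw (insert e) (all_matchings (induced_edges E (U - e)))
           {M\<in>all_matchings (induced_edges E U). e \<in> M}"
proof (rule bij_betwI[where g="\<lambda>M. M - {e}"])
  show "insert e \<in> all_matchings (induced_edges E (U - e)) \<rightarrow> {M\<in>all_matchings (induced_edges E U). e \<in> M}"
  proof
    fix M assume M: "M \<in> all_matchings (induced_edges E (U - e))"
    then have "\<forall>y\<in>M. disjnt e y \<and> disjnt y e" "pairwise disjnt M"
      by (auto simp: all_matchings_def induced_edges_def disjnt_def)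
    then have "pairwise disjnt (insert e M)" by (auto simp: pairwise_insert)
    then show "insert e M \<in> {M\<in>all_matchings (induced_edges E U). e \<in> M}"
      using M e by (auto simp: all_matchings_def induced_edges_def)
  qed
  show "(\<lambda>M. M - {e}) \<in> {M\<in>all_matchings (induced_edges E U). e \<in> M} \<rightarrow> all_matchings (induced_edges E (U - e))"
  proof
    fix M assume M: "M \<in> {M\<in>all_matchings (induced_edges E U). e \<in> M}"
    then have "disjnt e y" if "y \<in> M - {e}" for y
      using that by (auto simp: all_matchings_def pairwise_def)
    then show "M - {e} \<in> all_matchings (induced_edges E (U - e))"
      using M by (auto simp: all_matchings_def induced_edges_def disjnt_def pairwise_def)
  qed
  show "insert e M - {e} = M" if "M \<in> all_matchings (induced_edges E (U - e))" for M
    using that e(2) by (auto simp: all_matchings_def induced_edges_def)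
  show "insert e (M - {e}) = M" if "M \<in> {M\<in>all_matchings (induced_edges E U). e \<in> M}" for M
    using that by auto
qed

lemma sum_matchings_avoiding_vertex:
  assumes "finite U" "u \<in> U"
  shows "(\<Sum>M\<in>{M\<in>all_matchings (induced_edges E U). u \<notin> \<Union>M}. (-t) ^ card M * (\<Prod>j\<in>U - \<Union>M. s j))
           = s u * weighted_matching_sum t E s (U - {u})"
proof -
  have avoiding: "{M\<in>all_matchings (induced_edges E U). u \<notin> \<Union>M} = all_matchings (induced_edges E (U - {u}))"
    by (auto simp: all_matchings_def induced_edges_def)
  have "(-t) ^ card M * (\<Prod>j\<in>U - \<Union>M. s j) = s u * ((-t) ^ card M * (\<Prod>j\<in>U - {u} - \<Union>M. s j))"
    if "M \<in> all_matchings (induced_edges E (U - {u}))" for M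
  proof -
    have "U - \<Union>M = insert u (U - {u} - \<Union>M)"
      using that assms by (auto simp: all_matchings_def induced_edges_def)
    then show ?thesis using assms by simp
  qed
  then show ?thesis
    unfolding avoiding weighted_matching_sum_def sum_distrib_left by (rule sum.cong[OF refl])
qed

lemma sum_matchings_containing_edge:
  assumes U: "finite U" and e: "e \<in> induced_edges E U" "e \<noteq> {}"
  shows "(\<Sum>M\<in>{M\<in>all_matchings (induced_edges E U). e \<in> M}. (-t) ^ card M * (\<Prod>j\<in>U - \<Union>M. s j))
           = - t * weighted_matching_sum t E s (U - e)"
proof -
  define g where "g M = (-t) ^ card M * (\<Prod>j\<in>U - \<Union>M. s j)" for M :: "'a set set"
  have "sum g {M\<in>all_matchings (induced_edges E U). e \<in> M}
      = (\<Sum>M\<in>all_matchings (induced_edges E (U - e)). g (insert e M))"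
    using sum.reindex_bij_betw[OF bij_betw_insert_all_matchings[OF e], of g] by simp
  also have "\<dots> = (\<Sum>M\<in>all_matchings (induced_edges E (U - e)).
                     - t * ((-t) ^ card M * (\<Prod>j\<in>U - e - \<Union>M. s j)))"
  proof (rule sum.cong[OF refl])
    fix M assume M: "M \<in> all_matchings (induced_edges E (U - e))"
    have "e \<notin> M" using M e(2) by (auto simp: all_matchings_def induced_edges_def)
    moreover have "finite M"
      using M finite_induced_edges[of "U - e" E] U by (auto simp: all_matchings_def intro: finite_subset)
    moreover have "U - \<Union>(insert e M) = U - e - \<Union>M" by auto
    ultimately show "g (insert e M) = - t * ((-t) ^ card M * (\<Prod>j\<in>U - e - \<Union>M. s j))"
      by (simp add: g_def)
  qed
  finally show ?thesis by (simp add: g_def weighted_matching_sum_def sum_distrib_left)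
qed

text \<open>Split the matchings according to whether they cover \<open>u\<close>, and if so by which edge.\<close>

lemma weighted_matching_sum_expand_vertex:
  assumes U: "finite U" "u \<in> U"
  shows "weighted_matching_sum t E s U = s u * weighted_matching_sum t E s (U - {u})
           - t * (\<Sum>e\<in>{e\<in>induced_edges E U. u \<in> e}. weighted_matching_sum t E s (U - e))"
proof -
  define F where "F = induced_edges E U"
  define g where "g M = (-t) ^ card M * (\<Prod>j\<in>U - \<Union>M. s j)" for M :: "'a set set"
  define A where "A = {M\<in>all_matchings F. u \<notin> \<Union>M}"
  define Fu where "Fu = {e\<in>F. u \<in> e}"
  define B where "B e = {M\<in>all_matchings F. e \<in> M}" for e
  have fin: "finite F" "finite (all_matchings F)"
    using U by (simp_all add: F_def finite_induced_edges finite_all_matchings)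
  have split: "all_matchings F = A \<union> (\<Union>e\<in>Fu. B e)" by (auto simp: A_def B_def Fu_def all_matchings_def)
  have "weighted_matching_sum t E s U = sum g (A \<union> (\<Union>e\<in>Fu. B e))"
    unfolding weighted_matching_sum_def F_def[symmetric] g_def[symmetric] split[symmetric] ..
  also have "\<dots> = sum g A + sum g (\<Union>e\<in>Fu. B e)"
    using fin by (intro sum.union_disjoint) (auto simp: A_def B_def Fu_def intro: rev_finite_subset[OF fin(2)])
  also have "sum g (\<Union>e\<in>Fu. B e) = (\<Sum>e\<in>Fu. sum g (B e))"
  proof (rule sum.UNION_disjoint)
    show "\<forall>e\<in>Fu. \<forall>e'\<in>Fu. e \<noteq> e' \<longrightarrow> B e \<inter> B e' = {}"
    proof (intro ballI impI)
      fix e e' assume e: "e \<in> Fu" "e' \<in> Fu" "e \<noteq> e'"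
      then have "disjnt e e'" if "M \<in> B e" "M \<in> B e'" for M
        using that by (auto simp: B_def all_matchings_def pairwise_def)
      then show "B e \<inter> B e' = {}" using e by (auto simp: Fu_def disjnt_def)
    qed
  qed (use fin in \<open>auto simp: B_def Fu_def\<close>)
  also have "sum g A = s u * weighted_matching_sum t E s (U - {u})"
    unfolding g_def A_def F_def by (rule sum_matchings_avoiding_vertex[OF U])
  also have "(\<Sum>e\<in>Fu. sum g (B e)) = (\<Sum>e\<in>Fu. - t * weighted_matching_sum t E s (U - e))"
  proof (rule sum.cong[OF refl])
    fix e assume "e \<in> Fu"
    then show "sum g (B e) = - t * weighted_matching_sum t E s (U - e)"
      unfolding g_def B_def F_def by (intro sum_matchings_containing_edge[OF U(1)]) (auto simp: Fu_def F_def)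
  qed
  finally show ?thesis by (simp add: Fu_def F_def sum_distrib_left sum_negf)
qed

lemma weighted_matching_sum_update:
  assumes U: "finite U" "u \<in> U"
  shows "weighted_matching_sum t E (s(u := a)) U
           = weighted_matching_sum t E s U + (a - s u) * weighted_matching_sum t E s (U - {u})"
proof -
  have "(\<Sum>e\<in>{e\<in>induced_edges E U. u \<in> e}. weighted_matching_sum t E (s(u := a)) (U - e))
      = (\<Sum>e\<in>{e\<in>induced_edges E U. u \<in> e}. weighted_matching_sum t E s (U - e))"
    by (intro sum.cong refl weighted_matching_sum_cong) auto
  moreover have "weighted_matching_sum t E (s(u := a)) (U - {u}) = weighted_matching_sum t E s (U - {u})"
    by (intro weighted_matching_sum_cong) auto
  ultimately show ?thesis
    unfolding weighted_matching_sum_expand_vertex[OF U, of t E "s(u := a)"]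
      weighted_matching_sum_expand_vertex[OF U, of t E s]
    by (simp add: algebra_simps)
qed

lemma weighted_matching_sum_remove_isolated:
  assumes "finite U" "finite Q" "Q \<subseteq> U" "\<forall>q\<in>Q. \<forall>e\<in>induced_edges E U. q \<notin> e"
  shows "weighted_matching_sum t E s U = (\<Prod>q\<in>Q. s q) * weighted_matching_sum t E s (U - Q)"
  using assms(2-4)
proof (induction Q rule: finite_induct)
  case (insert q Q)
  have empty: "{e\<in>induced_edges E (U - Q). q \<in> e} = {}"
    using insert.prems(2) induced_edges_mono[of "U - Q" U E] by auto
  have "q \<in> U - Q" "U - Q - {q} = U - insert q Q" using insert by auto
  then have "weighted_matching_sum t E s (U - Q) = s q * weighted_matching_sum t E s (U - insert q Q)"
    using weighted_matching_sum_expand_vertex[of "U - Q" q t E s, unfolded empty] assms(1) by simp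
  then show ?case using insert by (simp add: mult.assoc)
qed simp

text \<open>Expand at one leaf \<open>p\<^sub>0\<close> of the pendant edge; the remaining leaves are then isolated.\<close>

lemma weighted_matching_sum_pendant_edge:
  assumes U: "finite U" and pendant: "pendant_edge (induced_edges E U) e u" and P: "e - {u} \<noteq> {}"
  shows "weighted_matching_sum t E s U = (\<Prod>p\<in>e - {u}. s p) * weighted_matching_sum t E s (U - (e - {u}))
           - t * weighted_matching_sum t E s (U - e)"
proof -
  define P where "P = e - {u}"
  obtain p0 where p0: "p0 \<in> P" using P by (auto simp: P_def)
  have e: "e \<in> induced_edges E U" "u \<in> e" "e \<subseteq> U"
    using pendant by (auto simp: pendant_edge_def induced_edges_def)
  have fin: "finite e" "finite P" using e U by (auto simp: P_def intro: finite_subset)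
  have "p0 \<in> U" using p0 e by (auto simp: P_def)
  moreover have "{e'\<in>induced_edges E U. p0 \<in> e'} = {e}"
    using pendant p0 e by (auto simp: pendant_edge_def P_def)
  ultimately have expand: "weighted_matching_sum t E s U
      = s p0 * weighted_matching_sum t E s (U - {p0}) - t * weighted_matching_sum t E s (U - e)"
    using weighted_matching_sum_expand_vertex[OF U, of p0 t E s] by simp
  have "\<forall>q\<in>P - {p0}. \<forall>e'\<in>induced_edges E (U - {p0}). q \<notin> e'"
    using pendant p0 induced_edges_mono[of "U - {p0}" U E]
    by (fastforce simp: pendant_edge_def induced_edges_def P_def)
  moreover have "P - {p0} \<subseteq> U - {p0}" using e by (auto simp: P_def)
  ultimately have "weighted_matching_sum t E s (U - {p0})
      = (\<Prod>q\<in>P - {p0}. s q) * weighted_matching_sum t E s (U - {p0} - (P - {p0}))"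
    using weighted_matching_sum_remove_isolated[OF finite_Diff[OF U] finite_Diff[OF fin(2)]] by blast
  moreover have "U - {p0} - (P - {p0}) = U - P" using p0 by auto
  moreover have "(\<Prod>p\<in>P. s p) = s p0 * (\<Prod>q\<in>P - {p0}. s q)" using fin p0 by (simp add: prod.remove)
  ultimately show ?thesis using expand by (simp add: P_def mult.assoc)
qed

text \<open>Shifting the weight of \<open>u\<close> by \<open>c\<close> absorbs the second term of the pendant expansion.\<close>

lemma weighted_matching_sum_pendant_shift:
  assumes U: "finite U" and pendant: "pendant_edge (induced_edges E U) e u" and P: "e - {u} \<noteq> {}"
    and c: "(\<Prod>p\<in>e - {u}. s p) * c = t"
  shows "weighted_matching_sum t E s U
           = (\<Prod>p\<in>e - {u}. s p) * weighted_matching_sum t E (s(u := s u - c)) (U - (e - {u}))"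
proof -
  define SP where "SP = (\<Prod>p\<in>e - {u}. s p)"
  define U' where "U' = U - (e - {u})"
  have u: "u \<in> U'" and U'_u: "U' - {u} = U - e"
    using pendant by (auto simp: pendant_edge_def induced_edges_def U'_def)
  have "weighted_matching_sum t E (s(u := s u - c)) U'
      = weighted_matching_sum t E s U' - c * weighted_matching_sum t E s (U - e)"
    using weighted_matching_sum_update[of U' u t E s "s u - c"] U u U'_u by (simp add: U'_def)
  then have "SP * weighted_matching_sum t E (s(u := s u - c)) U'
      = SP * weighted_matching_sum t E s U' - SP * c * weighted_matching_sum t E s (U - e)"
    by (simp add: right_diff_distrib)
  also have "\<dots> = weighted_matching_sum t E s U"
    using weighted_matching_sum_pendant_edge[OF assms(1-3), of t s] c by (simp add: SP_def U'_def)
  finally show ?thesis by (simp add: SP_def U'_def)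
qed

section \<open>Weighted eigenvectors\<close>

text \<open>The eigen-equation of \<open>E[U]\<close> at a nowhere-zero vector, multiplied by \<open>x j\<close> and carrying vertex
  weights \<open>s\<close>; for \<open>s = (\<lambda>_. 1)\<close> it is the eigen-equation itself.\<close>

definition weighted_eigenvector ::
    "nat \<Rightarrow> 'a set set \<Rightarrow> complex \<Rightarrow> ('a \<Rightarrow> complex) \<Rightarrow> 'a set \<Rightarrow> ('a \<Rightarrow> complex) \<Rightarrow> bool" where
  "weighted_eigenvector k E lam s U x \<longleftrightarrow> (\<forall>j\<in>U. x j \<noteq> 0) \<and>
     (\<forall>j\<in>U. lam * s j * x j ^ k = (\<Sum>e\<in>{e\<in>induced_edges E U. j \<in> e}. \<Prod>i\<in>e. x i))"

definition loosely_attached :: "'a set set \<Rightarrow> 'a set \<Rightarrow> bool" where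
  "loosely_attached F W \<longleftrightarrow> (\<forall>e\<in>F. \<not> e \<subseteq> W \<longrightarrow> card (e \<inter> W) \<le> 1)"

lemma weighted_eigenvector_eq:
  "weighted_eigenvector k E lam s U x \<Longrightarrow> j \<in> U \<Longrightarrow>
     lam * s j * x j ^ k = (\<Sum>e\<in>{e\<in>induced_edges E U. j \<in> e}. \<Prod>i\<in>e. x i)"
  by (simp add: weighted_eigenvector_def)

lemma weighted_eigenvector_cong:
  "(\<And>j. j \<in> U \<Longrightarrow> s j = s' j) \<Longrightarrow>
     weighted_eigenvector k E lam s U x \<longleftrightarrow> weighted_eigenvector k E lam s' U x"
  by (simp add: weighted_eigenvector_def)

lemma uniform_pendant_edge_leaves:
  assumes "pendant_edge (induced_edges E U) e u" "\<forall>e\<in>E. card e = k" "k \<ge> 2"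
  shows "finite e" "card (e - {u}) = k - 1" "e - {u} \<noteq> {}"
proof -
  have "e \<in> E" "u \<in> e" using assms(1) by (auto simp: pendant_edge_def induced_edges_def)
  then show "finite e" "card (e - {u}) = k - 1" using assms(2,3) card.infinite by fastforce+
  then have "card (e - {u}) \<noteq> 0" using assms(3) by simp
  then show "e - {u} \<noteq> {}" by (metis card.empty)
qed

lemma induced_edges_ex_pendant_edge:
  assumes "\<not> hg_has_cycle E" "\<forall>e\<in>E. card e = k" "k \<ge> 2" "finite U" "induced_edges E U \<noteq> {}"
  shows "\<exists>e u. pendant_edge (induced_edges E U) e u"
proof (rule acyclic_ex_pendant_edge)
  show "finite (induced_edges E U)" using assms(4) by (rule finite_induced_edges)
  show "\<forall>e\<in>induced_edges E U. finite e \<and> 2 \<le> card e"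
    using assms(2,3) card.infinite by (fastforce simp: induced_edges_def)
  show "\<not> hg_has_cycle (induced_edges E U)"
    using assms(1) hg_has_cycle_mono[of "induced_edges E U" E] by (auto simp: induced_edges_def)
qed fact

subsection \<open>Eigenvectors force the weighted matching sum to vanish\<close>

lemma weighted_eigenvector_remove_pendant:
  assumes x: "weighted_eigenvector k E lam s U x" and U: "finite U"
    and pendant: "pendant_edge (induced_edges E U) e u"
    and uniform: "\<forall>e\<in>E. card e = k" and k: "k \<ge> 2" and lam: "lam \<noteq> 0"
  defines "c \<equiv> (\<Prod>i\<in>e. x i) / (lam * x u ^ k)"
  shows "weighted_eigenvector k E lam (s(u := s u - c)) (U - (e - {u})) x"
proof -
  define P where "P = e - {u}"
  note leaves = uniform_pendant_edge_leaves[OF pendant uniform k]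
  have e: "e \<in> induced_edges E U" "u \<in> e" "u \<in> U"
    using pendant by (auto simp: pendant_edge_def induced_edges_def)
  have x_nz: "x j \<noteq> 0" if "j \<in> U" for j using x that by (simp add: weighted_eigenvector_def)
  have IE': "induced_edges E (U - P) = induced_edges E U - {e}"
    using induced_edges_remove_pendant_leaves[OF pendant leaves(3)] by (simp add: P_def)
  have "lam * (s(u := s u - c)) j * x j ^ k = (\<Sum>e\<in>{e\<in>induced_edges E (U - P). j \<in> e}. \<Prod>i\<in>e. x i)"
    if j: "j \<in> U - P" for j
  proof (cases "j = u")
    case True
    have "{e'\<in>induced_edges E U. u \<in> e'} = insert e {e'\<in>induced_edges E (U - P). u \<in> e'}"
      unfolding IE' using e by auto
    moreover have "finite {e'\<in>induced_edges E (U - P). u \<in> e'}" using U by (simp add: finite_induced_edges)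
    moreover have "e \<notin> induced_edges E (U - P)" unfolding IE' by simp
    ultimately have "(\<Sum>e'\<in>{e'\<in>induced_edges E U. u \<in> e'}. \<Prod>i\<in>e'. x i)
        = (\<Prod>i\<in>e. x i) + (\<Sum>e'\<in>{e'\<in>induced_edges E (U - P). u \<in> e'}. \<Prod>i\<in>e'. x i)"
      by simp
    moreover have "lam * c * x u ^ k = (\<Prod>i\<in>e. x i)" using lam x_nz e(3) by (simp add: c_def)
    ultimately show ?thesis using weighted_eigenvector_eq[OF x e(3)] True by (simp add: algebra_simps)
  next
    case False
    then have "{e'\<in>induced_edges E (U - P). j \<in> e'} = {e'\<in>induced_edges E U. j \<in> e'}"
      using j unfolding IE' by (auto simp: P_def)
    then show ?thesis using weighted_eigenvector_eq[OF x] j False by simp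
  qed
  then show ?thesis using x_nz by (simp add: weighted_eigenvector_def P_def)
qed

text \<open>Each leaf lies on the pendant edge only, which pins down its weight.\<close>

lemma weighted_eigenvector_pendant_weights:
  assumes x: "weighted_eigenvector k E lam s U x" and U: "finite U"
    and pendant: "pendant_edge (induced_edges E U) e u"
    and uniform: "\<forall>e\<in>E. card e = k" and k: "k \<ge> 2" and lam: "lam \<noteq> 0"
  shows "(\<Prod>p\<in>e - {u}. s p) * ((\<Prod>i\<in>e. x i) / (lam * x u ^ k)) = 1 / lam ^ k"
proof -
  define P where "P = e - {u}"
  define pe where "pe = (\<Prod>i\<in>e. x i)"
  note leaves = uniform_pendant_edge_leaves[OF pendant uniform k]
  have e: "e \<in> induced_edges E U" "u \<in> e" "e \<subseteq> U"
    using pendant by (auto simp: pendant_edge_def induced_edges_def)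
  have x_nz: "x j \<noteq> 0" if "j \<in> U" for j using x that by (simp add: weighted_eigenvector_def)
  have pe_nz: "pe \<noteq> 0" using x_nz e leaves by (auto simp: pe_def)
  have s_leaf: "s p = pe / (lam * x p ^ k)" if p: "p \<in> P" for p
  proof -
    have "{e'\<in>induced_edges E U. p \<in> e'} = {e}" using pendant p e by (auto simp: pendant_edge_def P_def)
    moreover have "p \<in> U" using p e by (auto simp: P_def)
    ultimately have "lam * s p * x p ^ k = pe" using weighted_eigenvector_eq[OF x] by (simp add: pe_def)
    then show ?thesis using lam x_nz[OF \<open>p \<in> U\<close>] by (auto simp: field_simps)
  qed
  define X where "X = (\<Prod>p\<in>P. x p)"
  have pe_X: "pe = x u * X" using leaves e by (simp add: pe_def X_def P_def prod.remove)
  obtain k1 where k1: "k = Suc k1" using k by (cases k) auto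
  have "(\<Prod>p\<in>P. s p) = pe ^ k1 / (lam ^ k1 * X ^ k)"
    using leaves by (simp add: s_leaf prod_dividef prod.distrib X_def prod_power_distrib P_def k1)
  then have "(\<Prod>p\<in>P. s p) * (pe / (lam * x u ^ k)) = pe ^ Suc k1 / (lam ^ Suc k1 * (x u * X) ^ Suc k1)"
    by (simp add: k1 power_mult_distrib field_simps)
  also have "\<dots> = 1 / lam ^ k" using pe_nz lam by (simp add: pe_X[symmetric] k1)
  finally show ?thesis by (simp add: P_def pe_def)
qed

lemma weighted_eigenvector_imp_matching_sum_zero:
  assumes acyclic: "\<not> hg_has_cycle E" and uniform: "\<forall>e\<in>E. card e = k" and k: "k \<ge> 2"
    and lam: "lam \<noteq> 0"
  shows "finite U \<Longrightarrow> U \<noteq> {} \<Longrightarrow> weighted_eigenvector k E lam s U x \<Longrightarrow>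
    weighted_matching_sum (1 / lam ^ k) E s U = 0"
proof (induction "card U" arbitrary: U s rule: less_induct)
  case less
  show ?case
  proof (cases "induced_edges E U = {}")
    case True
    then have "s j = 0" if "j \<in> U" for j
      using less.prems(3) that lam by (auto simp: weighted_eigenvector_def)
    then have "(\<Prod>j\<in>U. s j) = 0" using less.prems(1,2) by (intro prod_zero) auto
    then show ?thesis using True by (simp add: weighted_matching_sum_no_edges)
  next
    case False
    then obtain e u where pendant: "pendant_edge (induced_edges E U) e u"
      using induced_edges_ex_pendant_edge[OF acyclic uniform k less.prems(1)] by blast
    note leaves = uniform_pendant_edge_leaves[OF pendant uniform k]
    note contract = weighted_eigenvector_remove_pendant[OF less.prems(3,1) pendant uniform k lam]
      weighted_eigenvector_pendant_weights[OF less.prems(3,1) pendant uniform k lam]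
    have e: "e \<subseteq> U" "u \<in> e" using pendant by (auto simp: pendant_edge_def induced_edges_def)
    have "card (U - (e - {u})) < card U"
      using leaves e less.prems(1) by (intro psubset_card_mono) auto
    moreover have "U - (e - {u}) \<noteq> {}" using e by auto
    ultimately have "weighted_matching_sum (1 / lam ^ k) E (s(u := s u - (\<Prod>i\<in>e. x i) / (lam * x u ^ k)))
        (U - (e - {u})) = 0"
      using less.hyps contract(1) less.prems(1) by blast
    then show ?thesis
      using weighted_matching_sum_pendant_shift[OF less.prems(1) pendant leaves(3) contract(2)] by simp
  qed
qed

subsection \<open>Vanishing weighted matching sums yield eigenvectors\<close>

lemma complex_nth_root_exists:
  assumes "n > 0"
  shows "\<exists>z::complex. z ^ n = c"
proof (cases "c = 0")
  case False
  then have "card {z::complex. z ^ n = c} \<noteq> 0" using card_nth_roots[OF False assms] assms by simp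
  then have "{z::complex. z ^ n = c} \<noteq> {}" by (metis card.empty)
  then show ?thesis by blast
qed (use assms in auto)

text \<open>All but one coordinate are arbitrary roots; the last one is fixed by the product.\<close>

lemma ex_roots_with_product:
  fixes a :: "'a \<Rightarrow> complex"
  assumes P: "finite P" "q \<in> P" and n: "n > 0" and a: "\<forall>p\<in>P. a p \<noteq> 0"
    and b: "b ^ n = (\<Prod>p\<in>P. a p)"
  shows "\<exists>y. (\<forall>p\<in>P. y p ^ n = a p) \<and> (\<Prod>p\<in>P. y p) = b"
proof -
  define r where "r p = (SOME z. z ^ n = a p)" for p
  have r: "r p ^ n = a p" for p unfolding r_def by (rule someI_ex) (rule complex_nth_root_exists[OF n])
  define R where "R = (\<Prod>p\<in>P - {q}. r p)"
  have "r p \<noteq> 0" if "p \<in> P" for p using r[of p] a that n by (auto simp: power_0_left)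
  then have R: "R \<noteq> 0" using P by (simp add: R_def)
  define y where "y p = (if p = q then b / R else r p)" for p
  have "y q ^ n = (\<Prod>p\<in>P. a p) / (\<Prod>p\<in>P - {q}. a p)"
    using b r by (simp add: y_def R_def power_divide prod_power_distrib)
  also have "\<dots> = a q" using P a by (simp add: prod.remove)
  finally have "\<forall>p\<in>P. y p ^ n = a p" using r by (simp add: y_def)
  moreover have "(\<Prod>p\<in>P. y p) = y q * (\<Prod>p\<in>P - {q}. y p)" using P by (simp add: prod.remove)
  moreover have "(\<Prod>p\<in>P - {q}. y p) = R" unfolding R_def y_def by (rule prod.cong) auto
  ultimately show ?thesis using R by (auto simp: y_def)
qed

lemma induced_edges_add_pendant_leaves:
  assumes pendant: "pendant_edge (induced_edges E U) e u" and W: "W \<subseteq> U - (e - {u})" "u \<in> W"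
  shows "induced_edges E (W \<union> (e - {u})) = insert e (induced_edges E W)"
proof (intro equalityI subsetI)
  fix e' assume e': "e' \<in> induced_edges E (W \<union> (e - {u}))"
  show "e' \<in> insert e (induced_edges E W)"
  proof (cases "e' = e")
    case False
    have "e' \<in> induced_edges E U" using e' W pendant by (auto simp: induced_edges_def pendant_edge_def)
    then have "e' \<inter> (e - {u}) = {}" using pendant False by (auto simp: pendant_edge_def)
    then show ?thesis using e' by (auto simp: induced_edges_def)
  qed simp
next
  fix e' assume "e' \<in> insert e (induced_edges E W)"
  then show "e' \<in> induced_edges E (W \<union> (e - {u}))"
    using pendant W by (auto simp: pendant_edge_def induced_edges_def)
qed

text \<open>The leaf values for re-attaching a pendant edge: each leaf \<open>p\<close> must satisfy its one-term
  equation, and their product must make the edge contribute \<open>\<lambda> c a\<^sup>k\<close> at the attaching vertex.\<close>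

lemma ex_pendant_leaf_values:
  fixes s :: "'a \<Rightarrow> complex"
  assumes P: "finite P" "P \<noteq> {}" "card P = k - 1" and k: "k \<ge> 2" and lam: "lam \<noteq> 0" and a: "a \<noteq> 0"
    and s: "\<forall>p\<in>P. s p \<noteq> 0" and c: "(\<Prod>p\<in>P. s p) * c = 1 / lam ^ k"
  shows "\<exists>y. (\<forall>p\<in>P. lam * s p * y p ^ k = lam * c * a ^ k) \<and> a * (\<Prod>p\<in>P. y p) = lam * c * a ^ k"
proof -
  define pe where "pe = lam * c * a ^ k"
  obtain k1 where k1: "k = Suc k1" using k by (cases k) auto
  have SP_nz: "(\<Prod>p\<in>P. s p) \<noteq> 0" using s P by simp
  have pe_nz: "pe \<noteq> 0" using c lam a by (auto simp: pe_def)
  have "(pe / a) ^ k = pe ^ k1 * (pe / a ^ k)" by (simp add: k1 power_divide)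
  also have "pe / a ^ k = lam * c" using a by (simp add: pe_def)
  also have "lam * c = 1 / (lam ^ k1 * (\<Prod>p\<in>P. s p))" using c lam SP_nz by (simp add: k1 field_simps)
  also have "pe ^ k1 * (1 / (lam ^ k1 * (\<Prod>p\<in>P. s p))) = (\<Prod>p\<in>P. pe / (lam * s p))"
    using P k1 by (simp add: prod_dividef prod.distrib)
  finally have "(pe / a) ^ k = (\<Prod>p\<in>P. pe / (lam * s p))" .
  moreover obtain q where "q \<in> P" using P by auto
  moreover have "\<forall>p\<in>P. pe / (lam * s p) \<noteq> 0" using pe_nz lam s by simp
  ultimately obtain y where y: "\<forall>p\<in>P. y p ^ k = pe / (lam * s p)" "(\<Prod>p\<in>P. y p) = pe / a"
    using ex_roots_with_product[of P q k "\<lambda>p. pe / (lam * s p)" "pe / a"] P k by auto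
  then show ?thesis using lam s a by (intro exI[of _ y]) (auto simp: pe_def)
qed

lemma weighted_eigenvector_add_pendant:
  assumes x: "weighted_eigenvector k E lam (s(u := s u - c)) W x"
    and pendant: "pendant_edge (induced_edges E U) e u"
    and W: "W \<subseteq> U - (e - {u})" "u \<in> W" "finite W"
    and uniform: "\<forall>e\<in>E. card e = k" and k: "k \<ge> 2" and lam: "lam \<noteq> 0"
    and s: "\<forall>p\<in>e - {u}. s p \<noteq> 0" and c: "(\<Prod>p\<in>e - {u}. s p) * c = 1 / lam ^ k"
  shows "\<exists>z. weighted_eigenvector k E lam s (W \<union> (e - {u})) z"
proof -
  define P where "P = e - {u}"
  define pe where "pe = lam * c * x u ^ k"
  note leaves = uniform_pendant_edge_leaves[OF pendant uniform k]
  have e: "u \<in> e" "u \<notin> P" "W \<inter> P = {}" "finite P" "P \<subseteq> e"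
    using pendant W leaves by (auto simp: pendant_edge_def P_def)
  have x_nz: "x j \<noteq> 0" if "j \<in> W" for j using x that by (simp add: weighted_eigenvector_def)
  obtain y where y: "\<forall>p\<in>P. lam * s p * y p ^ k = pe" "x u * (\<Prod>p\<in>P. y p) = pe"
    using ex_pendant_leaf_values[of P k lam "x u" s c] leaves k lam x_nz[OF W(2)] s c
    unfolding pe_def P_def by blast
  have pe_nz: "pe \<noteq> 0" using c lam x_nz[OF W(2)] by (auto simp: pe_def)
  define z where "z i = (if i \<in> P then y i else x i)" for i
  have z_W: "z i = x i" if "i \<in> W" for i using that e by (auto simp: z_def)
  have "(\<Prod>i\<in>e. z i) = z u * (\<Prod>i\<in>P. z i)"
    using e(1,2,4) insert_Diff[OF e(1)] prod.insert[of P u z] by (simp add: P_def)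
  also have "(\<Prod>i\<in>P. z i) = (\<Prod>i\<in>P. y i)" by (rule prod.cong) (auto simp: z_def)
  finally have prod_e: "(\<Prod>i\<in>e. z i) = pe" using y(2) z_W[OF W(2)] by simp
  have IE: "induced_edges E (W \<union> P) = insert e (induced_edges E W)"
    using induced_edges_add_pendant_leaves[OF pendant W(1,2)] by (simp add: P_def)
  have e_notin: "e \<notin> induced_edges E W" using e leaves(3) by (auto simp: induced_edges_def P_def)
  have sum_W: "(\<Sum>e'\<in>{e'\<in>induced_edges E W. j \<in> e'}. \<Prod>i\<in>e'. z i)
      = (\<Sum>e'\<in>{e'\<in>induced_edges E W. j \<in> e'}. \<Prod>i\<in>e'. x i)" for j
    using z_W by (auto simp: induced_edges_def intro!: sum.cong prod.cong)
  have "lam * s j * z j ^ k = (\<Sum>e'\<in>{e'\<in>induced_edges E (W \<union> P). j \<in> e'}. \<Prod>i\<in>e'. z i)"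
    if j: "j \<in> W \<union> P" for j
  proof -
    consider "j \<in> P" | "j = u" | "j \<in> W" "j \<notin> e" using j e(5) by (auto simp: P_def)
    then show ?thesis
    proof cases
      case 1
      then have "{e'\<in>induced_edges E (W \<union> P). j \<in> e'} = {e}"
        using e(3,5) unfolding IE by (auto simp: induced_edges_def)
      then show ?thesis using 1 y(1) prod_e by (simp add: z_def)
    next
      case 2
      have "{e'\<in>induced_edges E (W \<union> P). u \<in> e'} = insert e {e'\<in>induced_edges E W. u \<in> e'}"
        unfolding IE using e(1) by auto
      then have "(\<Sum>e'\<in>{e'\<in>induced_edges E (W \<union> P). u \<in> e'}. \<Prod>i\<in>e'. z i)
          = pe + (\<Sum>e'\<in>{e'\<in>induced_edges E W. u \<in> e'}. \<Prod>i\<in>e'. x i)"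
        using e_notin finite_induced_edges[OF W(3), of E] prod_e sum_W by simp
      also have "(\<Sum>e'\<in>{e'\<in>induced_edges E W. u \<in> e'}. \<Prod>i\<in>e'. x i) = lam * (s u - c) * x u ^ k"
        using weighted_eigenvector_eq[OF x W(2)] by simp
      finally show ?thesis using 2 z_W[OF W(2)] by (simp add: pe_def algebra_simps)
    next
      case 3
      then have "{e'\<in>induced_edges E (W \<union> P). j \<in> e'} = {e'\<in>induced_edges E W. j \<in> e'}"
        unfolding IE by auto
      moreover have "j \<noteq> u" using 3 e(1) by auto
      ultimately show ?thesis using weighted_eigenvector_eq[OF x 3(1)] z_W[OF 3(1)] by (simp add: sum_W)
    qed
  qed
  moreover have "z j \<noteq> 0" if "j \<in> W \<union> P" for j
  proof (cases "j \<in> P")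
    case True
    then have "lam * s j * y j ^ k = pe" using y(1) by blast
    then show ?thesis using True pe_nz k by (auto simp: z_def power_0_left)
  qed (use that x_nz z_W in auto)
  ultimately show ?thesis unfolding weighted_eigenvector_def P_def by blast
qed

lemma weighted_eigenvector_singleton:
  assumes "s j = 0" "\<forall>e\<in>E. card e = k" "k \<ge> 2"
  shows "weighted_eigenvector k E lam s {j} (\<lambda>_. 1)"
proof -
  have "e \<notin> induced_edges E {j}" for e
  proof
    assume "e \<in> induced_edges E {j}"
    then have "card e \<le> 1" "card e = k" using card_mono[of "{j}" e] assms(2) by (auto simp: induced_edges_def)
    then show False using assms(3) by simp
  qed
  then have "induced_edges E {j} = {}" by blast
  then show ?thesis using assms(1) by (simp add: weighted_eigenvector_def)
qed

lemma loosely_attached_remove_pendant: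
  assumes pendant: "pendant_edge (induced_edges E U) e u" "e - {u} \<noteq> {}"
    and W: "W \<subseteq> U - (e - {u})" and loose: "loosely_attached (induced_edges E (U - (e - {u}))) W"
  shows "u \<in> W \<Longrightarrow> loosely_attached (induced_edges E U) (W \<union> (e - {u}))"
    and "u \<notin> W \<Longrightarrow> loosely_attached (induced_edges E U) W"
proof -
  have other: "e' \<in> induced_edges E (U - (e - {u}))" "e' \<inter> (e - {u}) = {}"
    if "e' \<in> induced_edges E U" "e' \<noteq> e" for e'
    using that induced_edges_remove_pendant_leaves[OF pendant] pendant(1) by (auto simp: pendant_edge_def)
  show "loosely_attached (induced_edges E U) (W \<union> (e - {u}))" if "u \<in> W"
    unfolding loosely_attached_def
  proof (intro ballI impI)
    fix e' assume e': "e' \<in> induced_edges E U" "\<not> e' \<subseteq> W \<union> (e - {u})"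
    then have "e' \<noteq> e" using that by auto
    then have "e' \<in> induced_edges E (U - (e - {u}))" "e' \<inter> (W \<union> (e - {u})) = e' \<inter> W" "\<not> e' \<subseteq> W"
      using other[OF e'(1)] e'(2) by auto
    then show "card (e' \<inter> (W \<union> (e - {u}))) \<le> 1" using loose by (simp add: loosely_attached_def)
  qed
  show "loosely_attached (induced_edges E U) W" if "u \<notin> W"
    unfolding loosely_attached_def
  proof (intro ballI impI)
    fix e' assume e': "e' \<in> induced_edges E U" "\<not> e' \<subseteq> W"
    show "card (e' \<inter> W) \<le> 1"
    proof (cases "e' = e")
      case True
      then have "e' \<inter> W = {}" using W that by auto
      then show ?thesis by simp
    next
      case False
      then show ?thesis using other[OF e'(1)] e'(2) loose by (simp add: loosely_attached_def)
    qed
  qed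
qed

lemma matching_sum_zero_imp_weighted_eigenvector:
  assumes acyclic: "\<not> hg_has_cycle E" and uniform: "\<forall>e\<in>E. card e = k" and k: "k \<ge> 2"
    and lam: "lam \<noteq> 0"
  shows "finite U \<Longrightarrow> weighted_matching_sum (1 / lam ^ k) E s U = 0 \<Longrightarrow>
    \<exists>W\<subseteq>U. W \<noteq> {} \<and> (\<exists>x. weighted_eigenvector k E lam s W x) \<and> loosely_attached (induced_edges E U) W"
proof (induction "card U" arbitrary: U s rule: less_induct)
  case less
  show ?case
  proof (cases "\<exists>j\<in>U. s j = 0")
    case True
    then obtain j where "j \<in> U" "s j = 0" by blast
    then show ?thesis using weighted_eigenvector_singleton[OF _ uniform k]
      by (intro exI[of _ "{j}"]) (auto simp: loosely_attached_def card_le_Suc0_iff_eq)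
  next
    case False
    then have "induced_edges E U \<noteq> {}" using less.prems by (auto simp: weighted_matching_sum_no_edges)
    then obtain e u where pendant: "pendant_edge (induced_edges E U) e u"
      using induced_edges_ex_pendant_edge[OF acyclic uniform k less.prems(1)] by blast
    note leaves = uniform_pendant_edge_leaves[OF pendant uniform k]
    define U' where "U' = U - (e - {u})"
    define c where "c = 1 / lam ^ k / (\<Prod>p\<in>e - {u}. s p)"
    have e: "e \<subseteq> U" "u \<in> e" using pendant by (auto simp: pendant_edge_def induced_edges_def)
    have s: "\<forall>p\<in>e - {u}. s p \<noteq> 0" using False e by auto
    then have c: "(\<Prod>p\<in>e - {u}. s p) * c = 1 / lam ^ k" using leaves by (simp add: c_def)
    have "weighted_matching_sum (1 / lam ^ k) E (s(u := s u - c)) U' = 0"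
      using weighted_matching_sum_pendant_shift[OF less.prems(1) pendant leaves(3) c] less.prems(2) s leaves
      by (simp add: U'_def)
    moreover have "card U' < card U" using leaves e less.prems(1) by (auto simp: U'_def intro!: psubset_card_mono)
    ultimately obtain W x where W: "W \<subseteq> U'" "W \<noteq> {}"
      and x: "weighted_eigenvector k E lam (s(u := s u - c)) W x"
      and loose: "loosely_attached (induced_edges E U') W"
      using less.hyps less.prems(1) by (metis U'_def finite_Diff)
    have W': "W \<subseteq> U - (e - {u})" "finite W" using W(1) less.prems(1) finite_subset by (auto simp: U'_def)
    show ?thesis
    proof (cases "u \<in> W")
      case True
      obtain z where "weighted_eigenvector k E lam s (W \<union> (e - {u})) z"
        using weighted_eigenvector_add_pendant[OF x pendant W'(1) True W'(2) uniform k lam s c] by blast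
      moreover have "W \<union> (e - {u}) \<subseteq> U" using W'(1) e by auto
      ultimately show ?thesis
        using loosely_attached_remove_pendant(1)[OF pendant leaves(3) W'(1) loose[unfolded U'_def] True] True
        by (intro exI[of _ "W \<union> (e - {u})"]) auto
    next
      case False
      have "weighted_eigenvector k E lam (s(u := s u - c)) W x = weighted_eigenvector k E lam s W x"
        using False by (intro weighted_eigenvector_cong) auto
      then have "weighted_eigenvector k E lam s W x" using x by simp
      then show ?thesis
        using loosely_attached_remove_pendant(2)[OF pendant leaves(3) W'(1) loose[unfolded U'_def] False] W
        by (intro exI[of _ W]) (auto simp: U'_def)
    qed
  qed
qed

section \<open>The eigen-equation as a sum over edges\<close>

lemma tensor_index_lists_eq_permutations:
  assumes uniform: "\<forall>e\<in>E. e \<subseteq> V \<and> card e = k" and k: "k \<ge> 1"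
  shows "{ixs\<in>{ixs. set ixs \<subseteq> V \<and> length ixs = k - 1}. set (j # ixs) \<in> E}
           = (\<Union>e\<in>{e\<in>E. j \<in> e}. permutations_of_set (e - {j}))"
proof (intro equalityI subsetI)
  fix ixs assume ixs: "ixs \<in> {ixs\<in>{ixs. set ixs \<subseteq> V \<and> length ixs = k - 1}. set (j # ixs) \<in> E}"
  then have "card (set (j # ixs)) = length (j # ixs)" using uniform k by auto
  then have "distinct (j # ixs)" by (rule card_distinct)
  then have "ixs \<in> permutations_of_set (set (j # ixs) - {j})" by (auto simp: permutations_of_set_def)
  then show "ixs \<in> (\<Union>e\<in>{e\<in>E. j \<in> e}. permutations_of_set (e - {j}))" using ixs by auto
next
  fix ixs assume "ixs \<in> (\<Union>e\<in>{e\<in>E. j \<in> e}. permutations_of_set (e - {j}))"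
  then obtain e where e: "e \<in> E" "j \<in> e" "set ixs = e - {j}" "distinct ixs"
    by (auto simp: permutations_of_set_def)
  then have "finite e" using uniform k card.infinite by force
  then show "ixs \<in> {ixs\<in>{ixs. set ixs \<subseteq> V \<and> length ixs = k - 1}. set (j # ixs) \<in> E}"
    using e uniform distinct_card[OF e(4)] by (auto simp: insert_absorb)
qed

text \<open>Each edge through \<open>j\<close> contributes its \<open>(k - 1)!\<close> orderings, which cancels the normalization.\<close>

lemma adj_tensor_sum_eq_edge_sum:
  assumes uniform: "\<forall>e\<in>E. e \<subseteq> V \<and> card e = k" and V: "finite V" and k: "k \<ge> 1"
  shows "(\<Sum>ixs\<in>{ixs. set ixs \<subseteq> V \<and> length ixs = k - 1}. adj_tensor k E (j # ixs) * (\<Prod>i\<leftarrow>ixs. x i))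
       = (\<Sum>e\<in>{e\<in>E. j \<in> e}. \<Prod>i\<in>e - {j}. x i)"
proof -
  define c :: complex where "c = 1 / of_nat (fact (k - 1))"
  have fin: "finite {ixs. set ixs \<subseteq> V \<and> length ixs = k - 1}" "finite {e\<in>E. j \<in> e}"
    using V uniform finite_subset[of "{e\<in>E. j \<in> e}" "Pow V"] by (auto simp: finite_lists_length_eq)
  have "(\<Sum>ixs\<in>{ixs. set ixs \<subseteq> V \<and> length ixs = k - 1}. adj_tensor k E (j # ixs) * (\<Prod>i\<leftarrow>ixs. x i))
      = (\<Sum>ixs\<in>{ixs. set ixs \<subseteq> V \<and> length ixs = k - 1}.
           if set (j # ixs) \<in> E then c * (\<Prod>i\<leftarrow>ixs. x i) else 0)"
    by (rule sum.cong) (auto simp: adj_tensor_def c_def)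
  also have "\<dots> = (\<Sum>ixs\<in>{ixs\<in>{ixs. set ixs \<subseteq> V \<and> length ixs = k - 1}. set (j # ixs) \<in> E}.
                   c * (\<Prod>i\<leftarrow>ixs. x i))"
    using fin(1) by (rule sum.inter_filter[symmetric])
  also have "\<dots> = (\<Sum>e\<in>{e\<in>E. j \<in> e}. \<Sum>ixs\<in>permutations_of_set (e - {j}). c * (\<Prod>i\<leftarrow>ixs. x i))"
    unfolding tensor_index_lists_eq_permutations[OF uniform k]
  proof (rule sum.UNION_disjoint)
    show "\<forall>e\<in>{e\<in>E. j \<in> e}. \<forall>e'\<in>{e\<in>E. j \<in> e}. e \<noteq> e' \<longrightarrow>
            permutations_of_set (e - {j}) \<inter> permutations_of_set (e' - {j}) = {}"
    proof (intro ballI impI)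
      fix e e' assume "e \<in> {e\<in>E. j \<in> e}" "e' \<in> {e\<in>E. j \<in> e}" "e \<noteq> e'"
      then have "e - {j} \<noteq> e' - {j}" by (metis (mono_tags) insert_Diff mem_Collect_eq)
      then show "permutations_of_set (e - {j}) \<inter> permutations_of_set (e' - {j}) = {}"
        by (auto simp: permutations_of_set_def)
    qed
  qed (use fin(2) in auto)
  also have "\<dots> = (\<Sum>e\<in>{e\<in>E. j \<in> e}. \<Prod>i\<in>e - {j}. x i)"
  proof (rule sum.cong[OF refl])
    fix e assume e: "e \<in> {e\<in>E. j \<in> e}"
    then have "e \<subseteq> V" using uniform by auto
    then have "finite e" using V by (rule finite_subset)
    then have e: "finite e" "card (e - {j}) = k - 1" using e uniform by auto
    have "(\<Prod>i\<leftarrow>ixs. x i) = (\<Prod>i\<in>e - {j}. x i)" if "ixs \<in> permutations_of_set (e - {j})" for ixs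
    proof -
      have "distinct ixs" "set ixs = e - {j}" using that by (auto simp: permutations_of_set_def)
      then show ?thesis by (metis prod.distinct_set_conv_list)
    qed
    then have "(\<Sum>ixs\<in>permutations_of_set (e - {j}). c * (\<Prod>i\<leftarrow>ixs. x i))
        = (\<Sum>ixs\<in>permutations_of_set (e - {j}). c * (\<Prod>i\<in>e - {j}. x i))"
      by (intro sum.cong) auto
    also have "\<dots> = of_nat (fact (k - 1)) * c * (\<Prod>i\<in>e - {j}. x i)" using e by simp
    finally show "(\<Sum>ixs\<in>permutations_of_set (e - {j}). c * (\<Prod>i\<leftarrow>ixs. x i)) = (\<Prod>i\<in>e - {j}. x i)"
      by (simp add: c_def)
  qed
  finally show ?thesis .
qed

lemma k_uniform_finite:
  assumes "k_uniform k V E"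
  shows "finite E" and "e \<in> E \<Longrightarrow> finite e"
proof -
  have V: "finite V" "E \<subseteq> Pow V" using assms by (auto simp: k_uniform_def)
  then show "finite E" by (metis finite_Pow_iff finite_subset)
  show "finite e" if "e \<in> E" using V that by (meson PowD finite_subset subsetD)
qed

lemma hg_eigenpair_iff_edge_sums:
  assumes "k_uniform k V E" "k \<ge> 1"
  shows "hg_eigenpair k V E lam x \<longleftrightarrow> (\<exists>v\<in>V. x v \<noteq> 0) \<and>
           (\<forall>j\<in>V. (\<Sum>e\<in>{e\<in>E. j \<in> e}. \<Prod>i\<in>e - {j}. x i) = lam * x j ^ (k - 1))"
  using assms adj_tensor_sum_eq_edge_sum[of E V k]
  by (simp add: hg_eigenpair_def k_uniform_def)

section \<open>Matching polynomial\<close>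

lemma poly_matching_poly_induced:
  assumes U: "finite U" and lam: "lam \<noteq> 0"
  shows "poly (matching_poly k (induced_edges E U)) lam
         = lam ^ (max_matching_size (induced_edges E U) * k) * weighted_matching_sum (1 / lam ^ k) E (\<lambda>_. 1) U"
proof -
  define F where "F = induced_edges E U"
  define m where "m = max_matching_size F"
  define t where "t = 1 / lam ^ k"
  have fin: "finite F" "finite (all_matchings F)" using U by (simp_all add: F_def finite_induced_edges finite_all_matchings)
  have fin_sizes: "finite {i. matchings F i \<noteq> {}}"
    by (rule finite_subset[of _ "{..card F}"]) (use fin card_mono[of F] in \<open>auto simp: matchings_def\<close>)
  have card_le: "card M \<le> m" if "M \<in> all_matchings F" for M
  proof -
    have "card M \<in> {i. matchings F i \<noteq> {}}" using that by (auto simp: matchings_eq_all_matchings)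
    then show ?thesis unfolding m_def max_matching_size_def by (rule Max_ge[OF fin_sizes])
  qed
  have "weighted_matching_sum t E (\<lambda>_. 1) U = (\<Sum>M\<in>all_matchings F. (-t) ^ card M)"
    by (simp add: weighted_matching_sum_def F_def)
  also have "\<dots> = (\<Sum>i\<le>m. \<Sum>M\<in>{M\<in>all_matchings F. card M = i}. (-t) ^ card M)"
    by (rule sum.group[symmetric]) (use fin card_le in auto)
  also have "\<dots> = (\<Sum>i\<le>m. of_nat (card (matchings F i)) * (-t) ^ i)"
  proof (rule sum.cong[OF refl])
    fix i
    have "(\<Sum>M\<in>{M\<in>all_matchings F. card M = i}. (-t) ^ card M)
        = (\<Sum>M\<in>{M\<in>all_matchings F. card M = i}. (-t) ^ i)" by (rule sum.cong) auto
    then show "(\<Sum>M\<in>{M\<in>all_matchings F. card M = i}. (-t) ^ card M) = of_nat (card (matchings F i)) * (-t) ^ i"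
      by (simp add: matchings_eq_all_matchings)
  qed
  finally have W: "weighted_matching_sum t E (\<lambda>_. 1) U = (\<Sum>i\<le>m. of_nat (card (matchings F i)) * (-t) ^ i)" .
  have "poly (matching_poly k F) lam
      = (\<Sum>i\<le>m. (-1) ^ i * of_nat (card (matchings F i)) * lam ^ ((m - i) * k))"
    by (simp add: matching_poly_def m_def poly_sum poly_monom Let_def)
  also have "\<dots> = (\<Sum>i\<le>m. lam ^ (m * k) * (of_nat (card (matchings F i)) * (-t) ^ i))"
  proof (rule sum.cong[OF refl])
    fix i assume "i \<in> {..m}"
    then have "m * k = (m - i) * k + i * k" by (simp add: add_mult_distrib[symmetric])
    then have "lam ^ (m * k) = lam ^ ((m - i) * k) * (lam ^ k) ^ i"
      by (metis power_add power_mult mult.commute)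
    then show "(-1) ^ i * of_nat (card (matchings F i)) * lam ^ ((m - i) * k)
        = lam ^ (m * k) * (of_nat (card (matchings F i)) * (-t) ^ i)"
      using lam by (simp add: t_def power_minus' power_divide field_simps)
  qed
  also have "\<dots> = lam ^ (m * k) * weighted_matching_sum t E (\<lambda>_. 1) U" by (simp add: W sum_distrib_left)
  finally show ?thesis by (simp add: F_def m_def t_def)
qed

lemma matching_poly_induced_root_iff:
  assumes "finite U" "lam \<noteq> 0"
  shows "poly (matching_poly k (induced_edges E U)) lam = 0 \<longleftrightarrow>
           weighted_matching_sum (1 / lam ^ k) E (\<lambda>_. 1) U = 0"
  using poly_matching_poly_induced[OF assms] assms(2) by simp

section \<open>Connected components\<close>

definition hg_component :: "'a set set \<Rightarrow> 'a \<Rightarrow> 'a set" where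
  "hg_component F a = {v. (a, v) \<in> (hg_adj F)\<^sup>*}"

lemma hg_component_self: "a \<in> hg_component F a"
  by (simp add: hg_component_def)

lemma sym_hg_adj: "sym (hg_adj F)"
  by (auto simp: sym_def hg_adj_def)

lemma hg_component_edge_closed:
  "e \<in> F \<Longrightarrow> j \<in> e \<Longrightarrow> j \<in> hg_component F a \<Longrightarrow> e \<subseteq> hg_component F a"
  by (auto simp: hg_component_def hg_adj_def intro: rtrancl_into_rtrancl)

lemma hg_component_induced_subset:
  assumes "a \<in> S"
  shows "hg_component (induced_edges E S) a \<subseteq> S"
proof
  fix v assume "v \<in> hg_component (induced_edges E S) a"
  then have "(a, v) \<in> (hg_adj (induced_edges E S))\<^sup>*" by (simp add: hg_component_def)
  then show "v \<in> S"
    by (induction rule: rtrancl_induct) (use assms in \<open>auto simp: hg_adj_def induced_edges_def\<close>)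
qed

lemma hg_component_connected:
  fixes E :: "'a set set"
  assumes "a \<in> S"
  defines "C \<equiv> hg_component (induced_edges E S) a"
  shows "hg_connected C (induced_edges E C)"
proof -
  have walk: "(a, v) \<in> (hg_adj (induced_edges E C))\<^sup>*" if "v \<in> C" for v
  proof -
    have "(a, v) \<in> (hg_adj (induced_edges E S))\<^sup>*" using that by (simp add: C_def hg_component_def)
    then show ?thesis
    proof (induction rule: rtrancl_induct)
      case (step y z)
      then obtain f where f: "f \<in> induced_edges E S" "y \<in> f" "z \<in> f" by (auto simp: hg_adj_def)
      have "f \<subseteq> C" using hg_component_edge_closed[OF f(1,2)] step(1) by (simp add: C_def hg_component_def)
      then have "(y, z) \<in> hg_adj (induced_edges E C)" using f by (auto simp: hg_adj_def induced_edges_def)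
      then show ?case by (rule rtrancl_into_rtrancl[OF step(3)])
    qed simp
  qed
  show ?thesis unfolding hg_connected_def
    using walk sym_rtrancl[OF sym_hg_adj] by (meson rtrancl_trans symD)
qed

text \<open>On the connected component of the support through a nonzero coordinate, the eigenvector has no
  zero coordinates and every edge leaving the component carries a zero coordinate.\<close>

lemma hg_eigenpair_imp_weighted_eigenvector:
  assumes uniform: "k_uniform k V E" and k: "k \<ge> 1" and x: "hg_eigenpair k V E lam x"
    and a: "a \<in> V" "x a \<noteq> 0"
  defines "C \<equiv> hg_component (induced_edges E {j\<in>V. x j \<noteq> 0}) a"
  shows "weighted_eigenvector k E lam (\<lambda>_. 1) C x"
proof -
  define S where "S = {j\<in>V. x j \<noteq> 0}"
  have CS: "C \<subseteq> S" unfolding C_def S_def by (rule hg_component_induced_subset) (use a in simp)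
  note fin = k_uniform_finite[OF uniform]
  have "lam * x j ^ k = (\<Sum>e\<in>{e\<in>induced_edges E C. j \<in> e}. \<Prod>i\<in>e. x i)" if j: "j \<in> C" for j
  proof -
    have "(\<Sum>e\<in>{e\<in>E. j \<in> e}. \<Prod>i\<in>e. x i) = x j * (\<Sum>e\<in>{e\<in>E. j \<in> e}. \<Prod>i\<in>e - {j}. x i)"
      using fin by (auto simp: sum_distrib_left prod.remove intro!: sum.cong)
    also have "\<dots> = lam * x j ^ k"
      using x j CS k hg_eigenpair_iff_edge_sums[OF uniform k] by (cases k) (auto simp: S_def)
    finally have "(\<Sum>e\<in>{e\<in>E. j \<in> e}. \<Prod>i\<in>e. x i) = lam * x j ^ k" .
    moreover have "(\<Sum>e\<in>{e\<in>E. j \<in> e}. \<Prod>i\<in>e. x i) = (\<Sum>e\<in>{e\<in>induced_edges E C. j \<in> e}. \<Prod>i\<in>e. x i)"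
    proof (rule sum.mono_neutral_right)
      show "\<forall>e\<in>{e\<in>E. j \<in> e} - {e\<in>induced_edges E C. j \<in> e}. (\<Prod>i\<in>e. x i) = 0"
      proof
        fix e assume e: "e \<in> {e\<in>E. j \<in> e} - {e\<in>induced_edges E C. j \<in> e}"
        then have "\<not> e \<subseteq> S"
          using hg_component_edge_closed[of e "induced_edges E S" j a] j by (auto simp: C_def S_def induced_edges_def)
        moreover have "e \<subseteq> V" using e uniform by (auto simp: k_uniform_def)
        ultimately obtain i where "i \<in> e" "x i = 0" by (auto simp: S_def)
        then show "(\<Prod>i\<in>e. x i) = 0" using e fin(2) by (auto intro: prod_zero)
      qed
    qed (auto simp: fin(1) induced_edges_def)
    ultimately show ?thesis by simp
  qed
  then show ?thesis using CS by (auto simp: weighted_eigenvector_def S_def)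
qed

lemma weighted_eigenvector_extend_by_zero:
  assumes uniform: "k_uniform k V E" and k: "k \<ge> 2" and W: "W \<subseteq> V" "W \<noteq> {}"
    and x: "weighted_eigenvector k E lam (\<lambda>_. 1) W x"
    and outside: "\<forall>e\<in>E. \<not> e \<subseteq> W \<longrightarrow> 2 \<le> card (e - W)"
  shows "hg_eigenpair k V E lam (\<lambda>i. if i \<in> W then x i else 0)"
proof -
  define z where "z i = (if i \<in> W then x i else 0)" for i
  note fin = k_uniform_finite[OF uniform]
  have vanish: "(\<Prod>i\<in>e - {j}. z i) = 0" if "e \<in> E" "\<not> e \<subseteq> W" for e j
  proof -
    have "\<not> e - W \<subseteq> {j}"
    proof
      assume "e - W \<subseteq> {j}"
      then have "card (e - W) \<le> 1" using card_mono[of "{j}" "e - W"] by simp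
      then show False using outside that by force
    qed
    then obtain i where "i \<in> e - {j}" "i \<notin> W" by blast
    then show ?thesis using fin(2)[OF that(1)] by (intro prod_zero) (auto simp: z_def)
  qed
  have "(\<Sum>e\<in>{e\<in>E. j \<in> e}. \<Prod>i\<in>e - {j}. z i) = lam * z j ^ (k - 1)" if j: "j \<in> V" for j
  proof (cases "j \<in> W")
    case True
    have "(\<Sum>e\<in>{e\<in>E. j \<in> e}. \<Prod>i\<in>e - {j}. z i) = (\<Sum>e\<in>{e\<in>induced_edges E W. j \<in> e}. \<Prod>i\<in>e - {j}. z i)"
      using vanish fin(1) by (intro sum.mono_neutral_right) (auto simp: induced_edges_def)
    also have "\<dots> = (\<Sum>e\<in>{e\<in>induced_edges E W. j \<in> e}. \<Prod>i\<in>e - {j}. x i)"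
      by (intro sum.cong prod.cong refl) (auto simp: z_def induced_edges_def)
    finally have "(\<Sum>e\<in>{e\<in>E. j \<in> e}. \<Prod>i\<in>e - {j}. z i)
        = (\<Sum>e\<in>{e\<in>induced_edges E W. j \<in> e}. \<Prod>i\<in>e - {j}. x i)" .
    moreover have "(\<Sum>e\<in>{e\<in>induced_edges E W. j \<in> e}. \<Prod>i\<in>e - {j}. x i) = lam * x j ^ (k - 1)"
    proof -
      have "(\<Sum>e\<in>{e\<in>induced_edges E W. j \<in> e}. \<Prod>i\<in>e. x i)
          = x j * (\<Sum>e\<in>{e\<in>induced_edges E W. j \<in> e}. \<Prod>i\<in>e - {j}. x i)"
        using fin(2) by (auto simp: sum_distrib_left prod.remove induced_edges_def intro!: sum.cong)
      then have "x j * (\<Sum>e\<in>{e\<in>induced_edges E W. j \<in> e}. \<Prod>i\<in>e - {j}. x i) = lam * x j ^ k"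
        using weighted_eigenvector_eq[OF x True] by simp
      also have "\<dots> = x j * (lam * x j ^ (k - 1))" using k by (cases k) auto
      finally show ?thesis using x True by (simp add: weighted_eigenvector_def)
    qed
    ultimately show ?thesis using True by (simp add: z_def)
  next
    case False
    then have "(\<Sum>e\<in>{e\<in>E. j \<in> e}. \<Prod>i\<in>e - {j}. z i) = 0" using vanish by (intro sum.neutral) auto
    then show ?thesis using False k by (simp add: z_def power_0_left)
  qed
  moreover have "\<exists>v\<in>V. z v \<noteq> 0" using W x by (auto simp: weighted_eigenvector_def z_def)
  ultimately show ?thesis using hg_eigenpair_iff_edge_sums[OF uniform] k by (simp add: z_def)
qed

lemma loosely_attached_in_acyclic:
  assumes acyclic: "\<not> hg_has_cycle E" and uniform: "\<forall>e\<in>E. card e = k" and k: "k \<ge> 3"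
    and W: "W \<subseteq> U" and conn: "hg_connected U (induced_edges E U)"
    and loose: "loosely_attached (induced_edges E U) W"
    and e: "e \<in> E" "\<not> e \<subseteq> W"
  shows "2 \<le> card (e - W)"
proof -
  have "card (e \<inter> W) \<le> 1"
  proof (cases "e \<subseteq> U")
    case True
    then show ?thesis using loose e by (auto simp: loosely_attached_def induced_edges_def)
  next
    case False
    have "finite e" using uniform e k card.infinite by force
    then have "card (e \<inter> W) \<le> card (e \<inter> U)" using W by (intro card_mono) auto
    then show ?thesis using acyclic_edge_meets_connected_set_at_most_once[OF acyclic e(1) False conn] by simp
  qed
  moreover have "finite e" "card e = k" using uniform e k card.infinite by force+
  then have "card (e - W) = k - card (e \<inter> W)" by (simp add: card_Diff_subset_Int)
  ultimately show ?thesis using k by linarith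
qed

lemma hg_eigenvalue_imp_connected_matching_root:
  assumes uniform: "k_uniform k V E" and acyclic: "\<not> hg_has_cycle E" and k: "k \<ge> 2"
    and lam: "lam \<noteq> 0" and eigenvalue: "hg_eigenvalue k V E lam"
  shows "\<exists>U\<subseteq>V. hg_connected U (induced_edges E U) \<and> poly (matching_poly k (induced_edges E U)) lam = 0"
proof -
  have card_k: "\<forall>e\<in>E. card e = k" and V: "finite V" using uniform by (auto simp: k_uniform_def)
  obtain x a where x: "hg_eigenpair k V E lam x" and a: "a \<in> V" "x a \<noteq> 0"
    using eigenvalue by (auto simp: hg_eigenvalue_def hg_eigenpair_def)
  define C where "C = hg_component (induced_edges E {j\<in>V. x j \<noteq> 0}) a"
  have S: "a \<in> {j\<in>V. x j \<noteq> 0}" using a by simp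
  have C: "C \<subseteq> V" "C \<noteq> {}" "hg_connected C (induced_edges E C)"
    using hg_component_induced_subset[OF S, of E] hg_component_self[of a]
      hg_component_connected[OF S, of E] by (auto simp: C_def)
  have "weighted_eigenvector k E lam (\<lambda>_. 1) C x"
    unfolding C_def by (rule hg_eigenpair_imp_weighted_eigenvector[OF uniform _ x a]) (use k in simp)
  then have "weighted_matching_sum (1 / lam ^ k) E (\<lambda>_. 1) C = 0"
    by (rule weighted_eigenvector_imp_matching_sum_zero[OF acyclic card_k k lam finite_subset[OF C(1) V] C(2)])
  then show ?thesis using C matching_poly_induced_root_iff[OF finite_subset[OF C(1) V] lam] by blast
qed

lemma connected_matching_root_imp_hg_eigenvalue:
  assumes uniform: "k_uniform k V E" and acyclic: "\<not> hg_has_cycle E" and k: "k \<ge> 3"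
    and lam: "lam \<noteq> 0" and U: "U \<subseteq> V" "hg_connected U (induced_edges E U)"
    and root: "poly (matching_poly k (induced_edges E U)) lam = 0"
  shows "hg_eigenvalue k V E lam"
proof -
  have card_k: "\<forall>e\<in>E. card e = k" and V: "finite V" using uniform by (auto simp: k_uniform_def)
  have fin: "finite U" using U(1) V by (rule finite_subset)
  have k2: "k \<ge> 2" using k by simp
  have "weighted_matching_sum (1 / lam ^ k) E (\<lambda>_. 1) U = 0"
    using root matching_poly_induced_root_iff[OF fin lam] by simp
  then have "\<exists>W\<subseteq>U. W \<noteq> {} \<and> (\<exists>x. weighted_eigenvector k E lam (\<lambda>_. 1) W x) \<and>
      loosely_attached (induced_edges E U) W"
    by (rule matching_sum_zero_imp_weighted_eigenvector[OF acyclic card_k k2 lam fin])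
  then obtain W x where W: "W \<subseteq> U" "W \<noteq> {}" "weighted_eigenvector k E lam (\<lambda>_. 1) W x"
    and loose: "loosely_attached (induced_edges E U) W" by blast
  have "\<forall>e\<in>E. \<not> e \<subseteq> W \<longrightarrow> 2 \<le> card (e - W)"
    using loosely_attached_in_acyclic[OF acyclic card_k k W(1) U(2) loose] by blast
  then show ?thesis
    using weighted_eigenvector_extend_by_zero[OF uniform k2 _ W(2,3)] W(1) U(1)
    unfolding hg_eigenvalue_def by blast
qed

theorem theorem2:
  fixes k :: nat and V :: "'a set" and E :: "'a set set" and lam :: complex
  assumes "k_hypertree k V E" and "k \<ge> 3" and "lam \<noteq> 0"
  shows "hg_eigenvalue k V E lam \<longleftrightarrow>
         (\<exists>U \<subseteq> V. hg_connected U (induced_edges E U) \<and>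
                   poly (matching_poly k (induced_edges E U)) lam = 0)"
proof -
  have uniform: "k_uniform k V E" and acyclic: "\<not> hg_has_cycle E"
    using assms(1) by (auto simp: k_hypertree_def)
  show ?thesis
    using hg_eigenvalue_imp_connected_matching_root[OF uniform acyclic _ assms(3)]
      connected_matching_root_imp_hg_eigenvalue[OF uniform acyclic assms(2,3)] assms(2)
    by auto
qed

end
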